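(* Let $u,v$ be rational numbers with $u^2-3v^2=1$. Then $$x_1=1,\quad x_2=2v,\quad y_1=4v^2+1,\quad y_2=2v(2v^2+1),\quad z_1=4uv^2,\quad z_2=8v^4+4v^2+1$$ satisfy $(x_1^4+x_2^4)(y_1^4+y_2^4)=z_1^4+z_2^4$. In fact, for arbitrary $u,v$, the difference $z_1^4+z_2^4-(x_1^4+x_2^4)(y_1^4+y_2^4)$ with these values equals, up to sign, $256v^8(u^2+3v^2+1)(u^2-3v^2-1)$. In particular, every integer solution $(u,v)$ of the Pell equation $u^2-3v^2=1$ yields an integer solution of this quartic equation, so the equation has infinitely many integer solutions with $x_1=1$. *)

theory Defs
  imports Complex_Main
begin

definition quartic_tuple :: "'a::comm_ring_1 \<Rightarrow> 'a \<Rightarrow> 'a \<times> 'a \<times> 'a \<times> 'a \<times> 'a \<times> 'a" where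
  "quartic_tuple u v = (1, 2*v, 4*v^2 + 1, 2*v*(2*v^2 + 1), 4*u*v^2, 8*v^4 + 4*v^2 + 1)"

definition quartic_eq :: "'a::comm_ring_1 \<times> 'a \<times> 'a \<times> 'a \<times> 'a \<times> 'a \<Rightarrow> bool" where
  "quartic_eq t = (case t of (x1, x2, y1, y2, z1, z2) \<Rightarrow>
     (x1^4 + x2^4) * (y1^4 + y2^4) = z1^4 + z2^4)"

end

theory Submission
  imports Defs
begin

text \<open>Over the integers the Pell equation has infinitely
  many solutions, generated from \<open>(1, 0)\<close> by the automorphism \<open>(u, v) \<mapsto> (2u + 3v, u + 2v)\<close>;
  distinct \<open>v\<close> give distinct tuples because \<open>x\<^sub>2 = 2v\<close>.\<close>

lemma quartic_tuple_defect:
  fixes u v :: "'a::comm_ring_1"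
  shows "(case quartic_tuple u v of (x1, x2, y1, y2, z1, z2) \<Rightarrow>
            z1^4 + z2^4 - (x1^4 + x2^4) * (y1^4 + y2^4))
         = 256 * v^8 * (u^2 + 3*v^2 + 1) * (u^2 - 3*v^2 - 1)"
  unfolding quartic_tuple_def prod.case by (simp add: eval_nat_numeral algebra_simps)

lemma quartic_eq_quartic_tuple:
  fixes u v :: "'a::comm_ring_1"
  assumes "u^2 - 3*v^2 = 1"
  shows "quartic_eq (quartic_tuple u v)"
proof -
  have "(case quartic_tuple u v of (x1, x2, y1, y2, z1, z2) \<Rightarrow>
           z1^4 + z2^4 - (x1^4 + x2^4) * (y1^4 + y2^4)) = 0"
    unfolding quartic_tuple_defect using assms by simp
  then show ?thesis
    unfolding quartic_eq_def by (simp add: quartic_tuple_def)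
qed

fun pell_solution :: "nat \<Rightarrow> int \<times> int" where
  "pell_solution 0 = (1, 0)"
| "pell_solution (Suc n) = (case pell_solution n of (u, v) \<Rightarrow> (2*u + 3*v, u + 2*v))"

lemma pell_solution_solves_pell:
  obtains u v where "pell_solution n = (u, v)" "u \<ge> 1" "v \<ge> 0" "u^2 - 3*v^2 = 1"
proof (induction n arbitrary: thesis)
  case 0
  then show ?case by simp
next
  case (Suc n)
  obtain u v where "pell_solution n = (u, v)" "u \<ge> 1" "v \<ge> 0" "u^2 - 3*v^2 = 1"
    using Suc.IH by blast
  then show ?case
    using Suc.prems by (simp add: power2_eq_square algebra_simps)
qed

lemma strict_mono_snd_pell_solution: "strict_mono (\<lambda>n. snd (pell_solution n))"
  unfolding strict_mono_Suc_iff
proof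
  fix n
  obtain u v where "pell_solution n = (u, v)" "u \<ge> 1" "v \<ge> 0"
    using pell_solution_solves_pell by metis
  then show "snd (pell_solution n) < snd (pell_solution (Suc n))" by simp
qed

lemma infinite_int_pell_quartic_tuples:
  "infinite {quartic_tuple u v | u v :: int. u^2 - 3*v^2 = 1}"
proof -
  let ?g = "\<lambda>n. (case pell_solution n of (u, v) \<Rightarrow> quartic_tuple u v) :: int \<times> int \<times> int \<times> int \<times> int \<times> int"
  have "inj ?g"
  proof (rule injI)
    fix m n
    assume "?g m = ?g n"
    then have "2 * snd (pell_solution m) = 2 * snd (pell_solution n)"
      by (simp add: quartic_tuple_def split: prod.splits)
    then show "m = n"
      using strict_mono_eq[OF strict_mono_snd_pell_solution] by simp
  qed
  moreover have "range ?g \<subseteq> {quartic_tuple u v | u v :: int. u^2 - 3*v^2 = 1}"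
  proof
    fix t assume "t \<in> range ?g"
    then obtain n where "t = ?g n" by blast
    moreover obtain u v where "pell_solution n = (u, v)" "u^2 - 3*v^2 = 1"
      using pell_solution_solves_pell by metis
    ultimately show "t \<in> {quartic_tuple u v | u v :: int. u^2 - 3*v^2 = 1}" by auto
  qed
  ultimately show ?thesis
    using finite_imageD finite_subset by blast
qed

theorem mainTheorem9:
  shows "(\<forall>u v :: rat. u^2 - 3*v^2 = 1 \<longrightarrow> quartic_eq (quartic_tuple u v))
     \<and> (\<forall>u v :: rat. (case quartic_tuple u v of (x1, x2, y1, y2, z1, z2) \<Rightarrow>
            z1^4 + z2^4 - (x1^4 + x2^4) * (y1^4 + y2^4))
          \<in> {256 * v^8 * (u^2 + 3*v^2 + 1) * (u^2 - 3*v^2 - 1),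
             - (256 * v^8 * (u^2 + 3*v^2 + 1) * (u^2 - 3*v^2 - 1))})
     \<and> (\<forall>u v :: int. u^2 - 3*v^2 = 1 \<longrightarrow> quartic_eq (quartic_tuple u v))
     \<and> infinite {t :: int \<times> int \<times> int \<times> int \<times> int \<times> int. quartic_eq t \<and> fst t = 1}
     \<and> infinite {quartic_tuple u v | u v :: int. u^2 - 3*v^2 = 1}"
proof -
  have "{quartic_tuple u v | u v :: int. u^2 - 3*v^2 = 1}
          \<subseteq> {t. quartic_eq t \<and> fst t = 1}"
    using quartic_eq_quartic_tuple by (auto simp: quartic_tuple_def)
  then have "infinite {t :: int \<times> int \<times> int \<times> int \<times> int \<times> int. quartic_eq t \<and> fst t = 1}"
    using infinite_int_pell_quartic_tuples finite_subset by blast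
  then show ?thesis
    by (simp add: quartic_eq_quartic_tuple quartic_tuple_defect infinite_int_pell_quartic_tuples)
qed

end
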